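(* For every graph $G$ on $n\ge 1$ vertices the following are equivalent: (a) $G$ belongs to CBU; (b) $G$ admits a homogeneous arc labeling; (c) $G$ is (isomorphic to) a subgraph of a graph $H_m^t$ obtained from the shift graph $H_m$ by iteratively adding $t$ false twins, for some values $m,t$ with $m+t\le n+1$; (d) $G$ belongs to $(2n-1)$-CBU.
   Context: Let $e_1,\ldots,e_d$ be the standard basis of $\mathbb{R}^d$. For $d\ge 1$, a graph belongs to $d$-CBU if one can assign to each vertex an axis-parallel box (product of $d$ closed intervals of positive length) in $\mathbb{R}^d$ such that the boxes have pairwise disjoint interiors, two distinct vertices are adjacent iff their boxes intersect, and any two intersecting boxes intersect in a $(d-1)$-dimensional box orthogonal to $e_1$. CBU is the union of $d$-CBU over all $d\ge 1$. A homogeneous arc labeling of $G$ is an acyclic orientation of $G$ together with a real label on each arc such that for every vertex all its outgoing arcs have the same label, all its incoming arcs have the same label, and the label of its incoming arcs is smaller than the label of its outgoing arcs. The shift graph $H_m$ has vertices the pairs $(i,j)$ with $1\le i<j\le m$, with $(i,j)$ and $(k,l)$ adjacent iff $j=k$ or $l=i$. Adding a false twin of a vertex $v$ means adding a new vertex $v'$ with $N(v')=N(v)$. *)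

theory Defs
  imports Main "HOL.Real"
begin

definition graph :: "'a set \<Rightarrow> ('a \<Rightarrow> 'a \<Rightarrow> bool) \<Rightarrow> bool" where
  "graph V E \<longleftrightarrow> finite V \<and> (\<forall>x y. E x y \<longrightarrow> x \<in> V \<and> y \<in> V)
      \<and> (\<forall>x y. E x y \<longrightarrow> E y x) \<and> (\<forall>x. \<not> E x x)"

text \<open>Points of R^d are functions nat => real vanishing at coordinates >= d
  (coordinate 0 corresponds to e_1).  The closed box [lo,hi] and its interior in R^d.\<close>
definition box :: "nat \<Rightarrow> (nat \<Rightarrow> real) \<Rightarrow> (nat \<Rightarrow> real) \<Rightarrow> (nat \<Rightarrow> real) set" where
  "box d lo hi = {x. (\<forall>i<d. lo i \<le> x i \<and> x i \<le> hi i) \<and> (\<forall>i\<ge>d. x i = 0)}"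

definition obox :: "nat \<Rightarrow> (nat \<Rightarrow> real) \<Rightarrow> (nat \<Rightarrow> real) \<Rightarrow> (nat \<Rightarrow> real) set" where
  "obox d lo hi = {x. (\<forall>i<d. lo i < x i \<and> x i < hi i) \<and> (\<forall>i\<ge>d. x i = 0)}"

text \<open>A (d-1)-dimensional box in R^d orthogonal to e_1 (coordinate 0 fixed to c).\<close>
definition facet_box :: "nat \<Rightarrow> (nat \<Rightarrow> real) set \<Rightarrow> bool" where
  "facet_box d S \<longleftrightarrow> (\<exists>c a b. (\<forall>i. 1 \<le> i \<and> i < d \<longrightarrow> a i < b i) \<and>
      S = {x. x 0 = c \<and> (\<forall>i. 1 \<le> i \<and> i < d \<longrightarrow> a i \<le> x i \<and> x i \<le> b i) \<and> (\<forall>i\<ge>d. x i = 0)})"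

definition d_CBU :: "nat \<Rightarrow> 'a set \<Rightarrow> ('a \<Rightarrow> 'a \<Rightarrow> bool) \<Rightarrow> bool" where
  "d_CBU d V E \<longleftrightarrow> d \<ge> 1 \<and> (\<exists>lo hi :: 'a \<Rightarrow> nat \<Rightarrow> real.
     (\<forall>v\<in>V. \<forall>i<d. lo v i < hi v i) \<and>
     (\<forall>u\<in>V. \<forall>v\<in>V. u \<noteq> v \<longrightarrow> obox d (lo u) (hi u) \<inter> obox d (lo v) (hi v) = {}) \<and>
     (\<forall>u\<in>V. \<forall>v\<in>V. u \<noteq> v \<longrightarrow> (E u v \<longleftrightarrow> box d (lo u) (hi u) \<inter> box d (lo v) (hi v) \<noteq> {})) \<and>
     (\<forall>u\<in>V. \<forall>v\<in>V. u \<noteq> v \<longrightarrow> box d (lo u) (hi u) \<inter> box d (lo v) (hi v) \<noteq> {} \<longrightarrow>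
        facet_box d (box d (lo u) (hi u) \<inter> box d (lo v) (hi v))))"

definition CBU :: "'a set \<Rightarrow> ('a \<Rightarrow> 'a \<Rightarrow> bool) \<Rightarrow> bool" where
  "CBU V E \<longleftrightarrow> (\<exists>d\<ge>1. d_CBU d V E)"

definition acyclic_orientation :: "'a set \<Rightarrow> ('a \<Rightarrow> 'a \<Rightarrow> bool) \<Rightarrow> ('a \<times> 'a) set \<Rightarrow> bool" where
  "acyclic_orientation V E D \<longleftrightarrow>
     (\<forall>u v. (u, v) \<in> D \<longrightarrow> E u v) \<and>
     (\<forall>u v. E u v \<longrightarrow> ((u, v) \<in> D \<longleftrightarrow> (v, u) \<notin> D)) \<and>
     acyclic D"

definition homogeneous_arc_labeling ::
    "'a set \<Rightarrow> ('a \<Rightarrow> 'a \<Rightarrow> bool) \<Rightarrow> ('a \<times> 'a) set \<Rightarrow> ('a \<times> 'a \<Rightarrow> real) \<Rightarrow> bool" where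
  "homogeneous_arc_labeling V E D lab \<longleftrightarrow> acyclic_orientation V E D \<and>
     (\<forall>v\<in>V.
        (\<forall>a\<in>D. \<forall>b\<in>D. fst a = v \<and> fst b = v \<longrightarrow> lab a = lab b) \<and>
        (\<forall>a\<in>D. \<forall>b\<in>D. snd a = v \<and> snd b = v \<longrightarrow> lab a = lab b) \<and>
        (\<forall>a\<in>D. \<forall>b\<in>D. snd a = v \<and> fst b = v \<longrightarrow> lab a < lab b))"

definition has_HAL :: "'a set \<Rightarrow> ('a \<Rightarrow> 'a \<Rightarrow> bool) \<Rightarrow> bool" where
  "has_HAL V E \<longleftrightarrow> (\<exists>D lab. homogeneous_arc_labeling V E D lab)"

definition shift_V :: "nat \<Rightarrow> (nat \<times> nat) set" where
  "shift_V m = {(i, j). 1 \<le> i \<and> i < j \<and> j \<le> m}"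

definition shift_E :: "nat \<Rightarrow> nat \<times> nat \<Rightarrow> nat \<times> nat \<Rightarrow> bool" where
  "shift_E m p q \<longleftrightarrow> p \<in> shift_V m \<and> q \<in> shift_V m \<and> (snd p = fst q \<or> snd q = fst p)"

text \<open>Adding a false twin v' (fresh) of a vertex v.\<close>
definition twin_map :: "'b \<Rightarrow> 'b \<Rightarrow> 'b \<Rightarrow> 'b" where
  "twin_map v v' x = (if x = v' then v else x)"

inductive add_twins :: "'b set \<Rightarrow> ('b \<Rightarrow> 'b \<Rightarrow> bool) \<Rightarrow> nat \<Rightarrow> 'b set \<Rightarrow> ('b \<Rightarrow> 'b \<Rightarrow> bool) \<Rightarrow> bool"
  for V E where
  base: "add_twins V E 0 V E"
| step: "add_twins V E t V1 E1 \<Longrightarrow> v \<in> V1 \<Longrightarrow> v' \<notin> V1 \<Longrightarrow>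
         add_twins V E (Suc t) (insert v' V1) (\<lambda>x y. E1 (twin_map v v' x) (twin_map v v' y))"

definition subgraph_iso :: "'a set \<Rightarrow> ('a \<Rightarrow> 'a \<Rightarrow> bool) \<Rightarrow> 'b set \<Rightarrow> ('b \<Rightarrow> 'b \<Rightarrow> bool) \<Rightarrow> bool" where
  "subgraph_iso V E W F \<longleftrightarrow> (\<exists>f. inj_on f V \<and> f ` V \<subseteq> W \<and>
      (\<forall>u\<in>V. \<forall>v\<in>V. E u v \<longrightarrow> F (f u) (f v)))"

definition twin_shift_sub :: "nat \<Rightarrow> 'a set \<Rightarrow> ('a \<Rightarrow> 'a \<Rightarrow> bool) \<Rightarrow> bool" where
  "twin_shift_sub n V E \<longleftrightarrow> (\<exists>m t W F. m + t \<le> n + 1 \<and>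
      add_twins (shift_V m) (shift_E m) t W F \<and> subgraph_iso V E W F)"

end

theory Submission
  imports Defs
begin

(* All four conditions are equivalent to the existence of abutting intervals: reals lo v < hi v
   for every vertex such that adjacent u, v satisfy hi u = lo v or hi v = lo u.
   In a CBU representation every contact is orthogonal to e_1, so the projections of the boxes
   to the first axis abut.  Conversely, abutting intervals give the first coordinate, and one
   further coordinate per vertex separates the non-adjacent pairs, so n coordinates suffice.
   A homogeneous arc labeling is the same thing: orient every edge from the interval that ends
   to the interval that starts at the common point and label it with that point.
   Ranking the right endpoints turns abutting intervals into a homomorphism v |-> (i, j) into
   the shift graph H_m, where m - 1 is at most the number of images; all but one vertex of each
   fibre become false twins, which gives m + t <= n + 1. *)

definition abutting_intervals ::
    "'a set \<Rightarrow> ('a \<Rightarrow> 'a \<Rightarrow> bool) \<Rightarrow> ('a \<Rightarrow> real) \<Rightarrow> ('a \<Rightarrow> real) \<Rightarrow> bool" where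
  "abutting_intervals V E lo hi \<longleftrightarrow>
     (\<forall>v\<in>V. lo v < hi v) \<and> (\<forall>u v. E u v \<longrightarrow> hi u = lo v \<or> hi v = lo u)"

lemma graph_edgeD:
  assumes "graph V E" "E u v"
  shows "u \<in> V" "v \<in> V" "E v u" "u \<noteq> v"
  using assms unfolding graph_def by metis+

lemma graph_finite: "graph V E \<Longrightarrow> finite V"
  by (simp add: graph_def)

section \<open>Homogeneous arc labelings\<close>

lemma abutting_intervals_imp_has_HAL:
  assumes g: "graph V E" and ai: "abutting_intervals V E lo hi"
  shows "has_HAL V E"
proof -
  define D where "D = {(u, v). E u v \<and> hi u = lo v}"
  have lo_hi: "lo v < hi v" if "v \<in> V" for v
    using ai that unfolding abutting_intervals_def by blast
  have lo_less: "lo u < lo v" if "(u, v) \<in> D" for u v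
    using that lo_hi graph_edgeD[OF g] unfolding D_def by fastforce
  have "acyclic D"
    by (rule acyclicI_order[where f = "\<lambda>v. - lo v"]) (simp add: lo_less)
  moreover have "(u, v) \<in> D \<longleftrightarrow> (v, u) \<notin> D" if e: "E u v" for u v
  proof -
    have "lo u < hi u" "lo v < hi v"
      using lo_hi graph_edgeD[OF g e] by auto
    moreover have "hi u = lo v \<or> hi v = lo u"
      using ai e unfolding abutting_intervals_def by blast
    ultimately show ?thesis
      using e graph_edgeD(3)[OF g e] unfolding D_def by auto
  qed
  ultimately have "acyclic_orientation V E D"
    unfolding acyclic_orientation_def D_def by blast
  then have "homogeneous_arc_labeling V E D (\<lambda>a. hi (fst a))"
    unfolding homogeneous_arc_labeling_def D_def using lo_hi by auto
  then show ?thesis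
    unfolding has_HAL_def by blast
qed

lemma homogeneous_arc_labeling_vertex_intervals:
  assumes g: "graph V E" and hal: "homogeneous_arc_labeling V E D lab"
  shows "\<exists>lo hi :: 'a \<Rightarrow> real. (\<forall>v. lo v < hi v) \<and> (\<forall>u v. (u, v) \<in> D \<longrightarrow> hi u = lo v)"
proof -
  have arc_V: "fst a \<in> V" "snd a \<in> V" if "a \<in> D" for a
    using hal that graph_edgeD[OF g, of "fst a" "snd a"]
    unfolding homogeneous_arc_labeling_def acyclic_orientation_def by auto
  have out_eq: "lab a = lab b" if "a \<in> D" "b \<in> D" "fst a = v" "fst b = v" "v \<in> V" for a b v
    using hal that unfolding homogeneous_arc_labeling_def by blast
  have in_eq: "lab a = lab b" if "a \<in> D" "b \<in> D" "snd a = v" "snd b = v" "v \<in> V" for a b v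
    using hal that unfolding homogeneous_arc_labeling_def by blast
  have in_less_out: "lab a < lab b" if "a \<in> D" "b \<in> D" "snd a = v" "fst b = v" "v \<in> V"
    for a b v
    using hal that unfolding homogeneous_arc_labeling_def by blast
  define out where "out v = lab (SOME a. a \<in> D \<and> fst a = v)" for v
  define inc where "inc v = lab (SOME a. a \<in> D \<and> snd a = v)" for v
  have out: "out (fst a) = lab a" if "a \<in> D" for a
    unfolding out_def
    using someI2[of "\<lambda>x. x \<in> D \<and> fst x = fst a" a "\<lambda>x. lab x = lab a"]
      out_eq[OF _ that _ refl arc_V(1)[OF that]] that by blast
  have inc: "inc (snd a) = lab a" if "a \<in> D" for a
    unfolding inc_def
    using someI2[of "\<lambda>x. x \<in> D \<and> snd x = snd a" a "\<lambda>x. lab x = lab a"]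
      in_eq[OF _ that _ refl arc_V(2)[OF that]] that by blast
  define hi where "hi v =
    (if \<exists>a\<in>D. fst a = v then out v else if \<exists>a\<in>D. snd a = v then inc v + 1 else 1)" for v
  define lo where "lo v = (if \<exists>a\<in>D. snd a = v then inc v else hi v - 1)" for v
  have "hi u = lo v" if "(u, v) \<in> D" for u v
  proof -
    have "\<exists>a\<in>D. fst a = u" "\<exists>a\<in>D. snd a = v"
      using that by force+
    then show ?thesis
      using out[OF that] inc[OF that] unfolding hi_def lo_def by simp
  qed
  moreover have "lo v < hi v" for v
  proof (cases "(\<exists>a\<in>D. snd a = v) \<and> (\<exists>b\<in>D. fst b = v)")
    case True
    then obtain a b where ab: "a \<in> D" "b \<in> D" "snd a = v" "fst b = v" by blast
    then have "lo v = lab a" "hi v = lab b"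
      using out[of b] inc[of a] unfolding lo_def hi_def by auto
    then show ?thesis
      using in_less_out[OF ab] arc_V(2)[OF ab(1)] ab(3) by simp
  qed (auto simp: lo_def hi_def)
  ultimately show ?thesis by blast
qed

lemma has_HAL_imp_abutting_intervals:
  assumes g: "graph V E" and "has_HAL V E"
  shows "\<exists>lo hi. abutting_intervals V E lo hi"
proof -
  obtain D lab where hal: "homogeneous_arc_labeling V E D lab"
    using \<open>has_HAL V E\<close> unfolding has_HAL_def by blast
  then obtain lo hi :: "'a \<Rightarrow> real" where "\<forall>v. lo v < hi v" "\<forall>u v. (u, v) \<in> D \<longrightarrow> hi u = lo v"
    using homogeneous_arc_labeling_vertex_intervals[OF g] by blast
  moreover have "(u, v) \<in> D \<or> (v, u) \<in> D" if "E u v" for u v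
    using hal that unfolding homogeneous_arc_labeling_def acyclic_orientation_def by blast
  ultimately have "abutting_intervals V E lo hi"
    unfolding abutting_intervals_def by blast
  then show ?thesis by blast
qed

section \<open>Contact box representations\<close>

lemma box_Int:
  "box d l1 h1 \<inter> box d l2 h2 = box d (\<lambda>i. max (l1 i) (l2 i)) (\<lambda>i. min (h1 i) (h2 i))"
  by (auto simp: box_def)

lemma box_eq_empty_iff: "box d L H = {} \<longleftrightarrow> (\<exists>i<d. H i < L i)"
proof
  assume empty: "box d L H = {}"
  show "\<exists>i<d. H i < L i"
  proof (rule ccontr)
    assume "\<not> (\<exists>i<d. H i < L i)"
    then have "\<forall>i<d. L i \<le> H i"
      by (meson not_less)
    then have "(\<lambda>i. if i < d then L i else 0) \<in> box d L H"
      by (simp add: box_def)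
    with empty show False by blast
  qed
next
  assume "\<exists>i<d. H i < L i"
  then show "box d L H = {}"
    unfolding box_def by fastforce
qed

lemma obox_Int_eq_emptyI:
  assumes "i < d" "min (h1 i) (h2 i) \<le> max (l1 i) (l2 i)"
  shows "obox d l1 h1 \<inter> obox d l2 h2 = {}"
proof (rule ccontr)
  assume "obox d l1 h1 \<inter> obox d l2 h2 \<noteq> {}"
  then obtain x where "x \<in> obox d l1 h1" "x \<in> obox d l2 h2"
    by blast
  then have "max (l1 i) (l2 i) < x i" "x i < min (h1 i) (h2 i)"
    using assms(1) unfolding obox_def by auto
  then show False
    using assms(2) by linarith
qed

lemma facet_box_boxI:
  assumes "0 < d" "L 0 = H 0" "\<forall>i. 1 \<le> i \<and> i < d \<longrightarrow> L i < H i"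
  shows "facet_box d (box d L H)"
proof -
  have "box d L H =
      {x. x 0 = L 0 \<and> (\<forall>i. 1 \<le> i \<and> i < d \<longrightarrow> L i \<le> x i \<and> x i \<le> H i) \<and> (\<forall>i\<ge>d. x i = 0)}"
  proof (intro set_eqI iffI)
    fix x
    assume "x \<in> box d L H"
    then show "x \<in> {x. x 0 = L 0 \<and> (\<forall>i. 1 \<le> i \<and> i < d \<longrightarrow> L i \<le> x i \<and> x i \<le> H i) \<and> (\<forall>i\<ge>d. x i = 0)}"
      using assms(1,2) unfolding box_def by (auto intro: antisym)
  next
    fix x
    assume x: "x \<in> {x. x 0 = L 0 \<and> (\<forall>i. 1 \<le> i \<and> i < d \<longrightarrow> L i \<le> x i \<and> x i \<le> H i) \<and> (\<forall>i\<ge>d. x i = 0)}"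
    have "L i \<le> x i \<and> x i \<le> H i" if "i < d" for i
      using x assms(2) that by (cases "i = 0") auto
    then show "x \<in> box d L H"
      using x unfolding box_def by auto
  qed
  then show ?thesis
    unfolding facet_box_def using assms(3) by blast
qed

lemma facet_box_box_flat:
  assumes "0 < d" "box d L H \<noteq> {}" "facet_box d (box d L H)"
  shows "L 0 = H 0"
proof (rule ccontr)
  assume "L 0 \<noteq> H 0"
  then have "L 0 < H 0"
    using assms(1,2) box_eq_empty_iff by (meson linorder_neqE)
  obtain z where z: "z \<in> box d L H"
    using assms(2) by blast
  have "z(0 := L 0) \<in> box d L H" "z(0 := H 0) \<in> box d L H"
    using z \<open>L 0 < H 0\<close> assms(1) by (auto simp: box_def)
  moreover obtain c a b where "box d L H =
      {x. x 0 = c \<and> (\<forall>i. 1 \<le> i \<and> i < d \<longrightarrow> a i \<le> x i \<and> x i \<le> b i) \<and> (\<forall>i\<ge>d. x i = 0)}"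
    using assms(3) unfolding facet_box_def by blast
  ultimately have "L 0 = c" "H 0 = c"
    by auto
  then show False
    using \<open>L 0 < H 0\<close> by simp
qed

lemma d_CBU_imp_abutting_intervals:
  assumes g: "graph V E" and "d_CBU d V E"
  shows "\<exists>lo hi. abutting_intervals V E lo hi"
proof -
  obtain lo hi :: "'a \<Rightarrow> nat \<Rightarrow> real" where
    lo_hi: "\<forall>v\<in>V. \<forall>i<d. lo v i < hi v i" and
    "\<forall>u\<in>V. \<forall>v\<in>V. u \<noteq> v \<longrightarrow> obox d (lo u) (hi u) \<inter> obox d (lo v) (hi v) = {}" and
    adj: "\<forall>u\<in>V. \<forall>v\<in>V. u \<noteq> v \<longrightarrow> (E u v \<longleftrightarrow> box d (lo u) (hi u) \<inter> box d (lo v) (hi v) \<noteq> {})" and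
    facet: "\<forall>u\<in>V. \<forall>v\<in>V. u \<noteq> v \<longrightarrow> box d (lo u) (hi u) \<inter> box d (lo v) (hi v) \<noteq> {} \<longrightarrow>
        facet_box d (box d (lo u) (hi u) \<inter> box d (lo v) (hi v))"
    using \<open>d_CBU d V E\<close> unfolding d_CBU_def by (elim conjE exE) (rule that)
  have "0 < d"
    using \<open>d_CBU d V E\<close> unfolding d_CBU_def by simp
  have "hi u 0 = lo v 0 \<or> hi v 0 = lo u 0" if e: "E u v" for u v
  proof -
    have uv: "u \<in> V" "v \<in> V" "u \<noteq> v"
      using graph_edgeD[OF g e] by auto
    then have meet: "box d (lo u) (hi u) \<inter> box d (lo v) (hi v) \<noteq> {}"
      using adj e by blast
    then have "facet_box d (box d (lo u) (hi u) \<inter> box d (lo v) (hi v))"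
      using facet uv by blast
    then have "max (lo u 0) (lo v 0) = min (hi u 0) (hi v 0)"
      using facet_box_box_flat[OF \<open>0 < d\<close> meet[unfolded box_Int]] unfolding box_Int by simp
    moreover have "lo u 0 < hi u 0" "lo v 0 < hi v 0"
      using lo_hi uv \<open>0 < d\<close> by auto
    ultimately show ?thesis by linarith
  qed
  then have "abutting_intervals V E (\<lambda>v. lo v 0) (\<lambda>v. hi v 0)"
    unfolding abutting_intervals_def using lo_hi \<open>0 < d\<close> by blast
  then show ?thesis by blast
qed

text \<open>Coordinate \<open>i \<in> {1..card V}\<close> belongs to the vertex \<open>w i\<close>: its box is \<open>[0,1]\<close> there,
  those of its neighbours \<open>[0,3]\<close> and all others \<open>[2,3]\<close>.  Of two distinct vertices, the one
  with the smaller index has index below \<open>card V \<le> d\<close>.\<close>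
lemma exists_separating_boxes:
  assumes g: "graph V E" and "card V \<le> d"
  shows "\<exists>l h :: 'a \<Rightarrow> nat \<Rightarrow> real. (\<forall>v i. l v i < h v i) \<and>
    (\<forall>u v i. E u v \<longrightarrow> max (l u i) (l v i) < min (h u i) (h v i)) \<and>
    (\<forall>u\<in>V. \<forall>v\<in>V. u \<noteq> v \<longrightarrow> \<not> E u v \<longrightarrow>
       (\<exists>i. 1 \<le> i \<and> i < d \<and> min (h u i) (h v i) < max (l u i) (l v i)))"
proof -
  define n where "n = card V"
  obtain w where w: "bij_betw w {1..n} V"
    using ex_bij_betw_nat_finite_1[OF graph_finite[OF g]] unfolding n_def by blast
  define ix where "ix = inv_into {1..n} w"
  have ix: "ix v \<in> {1..n}" "w (ix v) = v" if "v \<in> V" for v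
    using that w unfolding ix_def
    by (auto simp: bij_betw_def inv_into_into f_inv_into_f)
  define l where "l v i = (if i \<in> {1..n} \<and> v \<noteq> w i \<and> \<not> E v (w i) then 2 else 0 :: real)"
    for v i
  define h where "h v i = (if i \<in> {1..n} \<and> v = w i then 1 else 3 :: real)" for v i
  have "l v i < h v i" for v i
    unfolding l_def h_def by auto
  moreover have "max (l u i) (l v i) < min (h u i) (h v i)" if e: "E u v" for u v i
    using graph_edgeD[OF g e] e unfolding l_def h_def by auto
  moreover have "\<exists>i. 1 \<le> i \<and> i < d \<and> min (h u i) (h v i) < max (l u i) (l v i)"
    if "u \<in> V" "v \<in> V" "u \<noteq> v" "\<not> E u v" for u v
  proof -
    have separate: "min (h x (ix x)) (h y (ix x)) < max (l x (ix x)) (l y (ix x))"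
      if "x \<in> V" "y \<in> V" "x \<noteq> y" "\<not> E y x" for x y
    proof -
      have "h x (ix x) = 1" "l y (ix x) = 2"
        using ix[OF that(1)] that unfolding l_def h_def by auto
      then show ?thesis
        using min.cobounded1[of "h x (ix x)"] max.cobounded2[of _ "l y (ix x)"] by linarith
    qed
    have "\<not> E v u"
      using that graph_edgeD[OF g, of v u] by blast
    have "ix u \<noteq> ix v"
      using ix that by metis
    then consider "ix u < ix v" | "ix v < ix u"
      by linarith
    then show ?thesis
    proof cases
      case 1
      then have "1 \<le> ix u" "ix u < d"
        using ix(1) that(1,2) \<open>card V \<le> d\<close> unfolding n_def by fastforce+
      then show ?thesis
        using separate[OF that(1,2,3) \<open>\<not> E v u\<close>] by blast
    next
      case 2
      then have "1 \<le> ix v" "ix v < d"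
        using ix(1) that(1,2) \<open>card V \<le> d\<close> unfolding n_def by fastforce+
      moreover have "min (h u (ix v)) (h v (ix v)) < max (l u (ix v)) (l v (ix v))"
        using separate[OF that(2,1) not_sym[OF that(3)] that(4)]
        unfolding min.commute[of "h u (ix v)"] max.commute[of "l u (ix v)"] .
      ultimately show ?thesis
        by blast
    qed
  qed
  ultimately show ?thesis by blast
qed

lemma d_CBUI:
  fixes lo hi :: "'a \<Rightarrow> nat \<Rightarrow> real"
  assumes "1 \<le> d"
    and proper: "\<And>v i. v \<in> V \<Longrightarrow> i < d \<Longrightarrow> lo v i < hi v i"
    and touch: "\<And>u v. E u v \<Longrightarrow> max (lo u 0) (lo v 0) = min (hi u 0) (hi v 0)"
    and overlap: "\<And>u v i. E u v \<Longrightarrow> i \<noteq> 0 \<Longrightarrow> max (lo u i) (lo v i) < min (hi u i) (hi v i)"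
    and separate: "\<And>u v. u \<in> V \<Longrightarrow> v \<in> V \<Longrightarrow> u \<noteq> v \<Longrightarrow> \<not> E u v \<Longrightarrow>
      \<exists>i<d. min (hi u i) (hi v i) < max (lo u i) (lo v i)"
  shows "d_CBU d V E"
proof -
  have adj: "E u v \<longleftrightarrow> box d (lo u) (hi u) \<inter> box d (lo v) (hi v) \<noteq> {}"
    if "u \<in> V" "v \<in> V" "u \<noteq> v" for u v
  proof
    assume e: "E u v"
    have "max (lo u i) (lo v i) \<le> min (hi u i) (hi v i)" for i
      using touch[OF e] overlap[OF e, of i] by (cases "i = 0") auto
    then show "box d (lo u) (hi u) \<inter> box d (lo v) (hi v) \<noteq> {}"
      unfolding box_Int box_eq_empty_iff by (meson not_less)
  next
    assume "box d (lo u) (hi u) \<inter> box d (lo v) (hi v) \<noteq> {}"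
    then show "E u v"
      using separate[OF that] unfolding box_Int box_eq_empty_iff by blast
  qed
  have disjoint: "obox d (lo u) (hi u) \<inter> obox d (lo v) (hi v) = {}"
    if "u \<in> V" "v \<in> V" "u \<noteq> v" for u v
  proof (cases "E u v")
    case True
    then show ?thesis
      using obox_Int_eq_emptyI[of 0 d] touch \<open>1 \<le> d\<close> by simp
  next
    case False
    then show ?thesis
      using obox_Int_eq_emptyI separate[OF that False] by (meson less_imp_le)
  qed
  have facet: "facet_box d (box d (lo u) (hi u) \<inter> box d (lo v) (hi v))"
    if "u \<in> V" "v \<in> V" "u \<noteq> v" "box d (lo u) (hi u) \<inter> box d (lo v) (hi v) \<noteq> {}"
    for u v
  proof -
    have "E u v"
      using adj that by blast
    then show ?thesis
      unfolding box_Int using facet_box_boxI touch overlap \<open>1 \<le> d\<close> by simp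
  qed
  show ?thesis
    unfolding d_CBU_def
    by (intro conjI exI[of _ lo] exI[of _ hi] ballI allI impI \<open>1 \<le> d\<close> proper disjoint adj facet)
qed

lemma abutting_intervals_imp_d_CBU:
  assumes g: "graph V E" and ai: "abutting_intervals V E lo hi"
    and "card V \<le> d" "1 \<le> d"
  shows "d_CBU d V E"
proof -
  obtain l h :: "'a \<Rightarrow> nat \<Rightarrow> real" where
    l_h: "\<forall>v i. l v i < h v i" and
    overlap: "\<forall>u v i. E u v \<longrightarrow> max (l u i) (l v i) < min (h u i) (h v i)" and
    separate: "\<forall>u\<in>V. \<forall>v\<in>V. u \<noteq> v \<longrightarrow> \<not> E u v \<longrightarrow>
       (\<exists>i. 1 \<le> i \<and> i < d \<and> min (h u i) (h v i) < max (l u i) (l v i))"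
    using exists_separating_boxes[OF g \<open>card V \<le> d\<close>] by (elim exE conjE) (rule that)
  define lo' where "lo' v i = (if i = 0 then lo v else l v i)" for v i
  define hi' where "hi' v i = (if i = 0 then hi v else h v i)" for v i
  have lo'_hi': "lo' v i = l v i" "hi' v i = h v i" if "i \<noteq> 0" for v i
    using that unfolding lo'_def hi'_def by simp_all
  show ?thesis
  proof (rule d_CBUI[of d V lo' hi'])
    show "lo' v i < hi' v i" if "v \<in> V" for v i
      using ai l_h that unfolding abutting_intervals_def lo'_def hi'_def by simp
    show "max (lo' u 0) (lo' v 0) = min (hi' u 0) (hi' v 0)" if e: "E u v" for u v
    proof -
      have "lo u < hi u" "lo v < hi v" "hi u = lo v \<or> hi v = lo u"
        using ai graph_edgeD[OF g e] e unfolding abutting_intervals_def by auto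
      then show ?thesis
        unfolding lo'_def hi'_def by auto
    qed
    show "max (lo' u i) (lo' v i) < min (hi' u i) (hi' v i)" if "E u v" "i \<noteq> 0" for u v i
      using overlap that(1) unfolding lo'_hi'[OF that(2)] by blast
    show "\<exists>i<d. min (hi' u i) (hi' v i) < max (lo' u i) (lo' v i)"
      if non_adj: "u \<in> V" "v \<in> V" "u \<noteq> v" "\<not> E u v" for u v
    proof -
      obtain i where "1 \<le> i" "i < d" "min (h u i) (h v i) < max (l u i) (l v i)"
        using separate non_adj by blast
      then show ?thesis
        using lo'_hi'[of i] by auto
    qed
  qed (rule \<open>1 \<le> d\<close>)
qed

section \<open>Shift graphs with false twins\<close>

lemma abutting_intervals_pullback:
  assumes "abutting_intervals W F lo hi" "\<forall>v\<in>V. f v \<in> W" "\<forall>u v. E u v \<longrightarrow> F (f u) (f v)"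
  shows "abutting_intervals V E (lo \<circ> f) (hi \<circ> f)"
  using assms unfolding abutting_intervals_def by simp

lemma add_twins_abutting_intervals:
  assumes "add_twins V E t W F" "abutting_intervals V E lo hi"
  shows "\<exists>lo hi. abutting_intervals W F lo hi"
  using assms
proof (induction rule: add_twins.induct)
  case base
  then show ?case by blast
next
  case (step t V1 E1 v v')
  then obtain lo hi where "abutting_intervals V1 E1 lo hi"
    by blast
  then have "abutting_intervals (insert v' V1) (\<lambda>x y. E1 (twin_map v v' x) (twin_map v v' y))
      (lo \<circ> twin_map v v') (hi \<circ> twin_map v v')"
    by (rule abutting_intervals_pullback) (use step.hyps(2) in \<open>simp_all add: twin_map_def\<close>)
  then show ?case by blast
qed

lemma abutting_intervals_shift:
  "abutting_intervals (shift_V m) (shift_E m) (\<lambda>p. real (fst p)) (\<lambda>p. real (snd p))"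
  by (auto simp: abutting_intervals_def shift_V_def shift_E_def)

lemma twin_shift_sub_imp_abutting_intervals:
  assumes g: "graph V E" and "twin_shift_sub n V E"
  shows "\<exists>lo hi. abutting_intervals V E lo hi"
proof -
  obtain m t W F where twins: "add_twins (shift_V m) (shift_E m) t W F"
    and sub: "subgraph_iso V E W F"
    using \<open>twin_shift_sub n V E\<close> unfolding twin_shift_sub_def by blast
  obtain lo hi where W: "abutting_intervals W F lo hi"
    using add_twins_abutting_intervals[OF twins abutting_intervals_shift] by blast
  obtain f where f: "\<forall>v\<in>V. f v \<in> W" "\<forall>u\<in>V. \<forall>v\<in>V. E u v \<longrightarrow> F (f u) (f v)"
    using sub unfolding subgraph_iso_def by blast
  have "\<forall>u v. E u v \<longrightarrow> F (f u) (f v)"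
    using f(2) graph_edgeD[OF g] by blast
  then have "abutting_intervals V E (lo \<circ> f) (hi \<circ> f)"
    by (rule abutting_intervals_pullback[OF W f(1)])
  then show ?thesis by blast
qed

lemma add_twins_retraction:
  assumes "finite X" "X \<inter> W = {}" "\<forall>x\<in>W. r x = x" "r ` X \<subseteq> W"
  shows "\<exists>F'. add_twins W F (card X) (W \<union> X) F' \<and>
    (\<forall>x\<in>W \<union> X. \<forall>y\<in>W \<union> X. F' x y = F (r x) (r y))"
  using assms(1,2,4)
proof (induction X rule: finite_induct)
  case empty
  show ?case
    using add_twins.base[of W F] assms(3) by auto
next
  case (insert x X)
  then obtain F' where F': "add_twins W F (card X) (W \<union> X) F'"
    and F'_eq: "\<forall>a\<in>W \<union> X. \<forall>b\<in>W \<union> X. F' a b = F (r a) (r b)"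
    by blast
  have "r x \<in> W \<union> X" "x \<notin> W \<union> X"
    using insert by auto
  then have "add_twins W F (Suc (card X)) (insert x (W \<union> X))
      (\<lambda>a b. F' (twin_map (r x) x a) (twin_map (r x) x b))"
    by (rule add_twins.step[OF F'])
  moreover have "twin_map (r x) x a \<in> W \<union> X" "r (twin_map (r x) x a) = r a"
    if "a \<in> W \<union> insert x X" for a
    using that insert.prems assms(3) by (auto simp: twin_map_def)
  ultimately show ?case
    using insert.hyps F'_eq
    by (intro exI[of _ "\<lambda>a b. F' (twin_map (r x) x a) (twin_map (r x) x b)"]) simp
qed

lemma exists_subset_inj_on_same_image: "\<exists>R\<subseteq>A. inj_on f R \<and> f ` R = f ` A"
proof (intro exI conjI)
  show "inv_into A f ` f ` A \<subseteq> A"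
    by (auto intro: inv_into_into)
  have "inj_on (f \<circ> inv_into A f) (f ` A)"
    by (rule inj_onI) (simp add: f_inv_into_f)
  then show "inj_on f (inv_into A f ` f ` A)"
    by (rule inj_on_imageI)
  show "f ` inv_into A f ` f ` A = f ` A"
    by (force simp: image_image f_inv_into_f)
qed

text \<open>One point of each fibre of \<open>g\<close> is sent to its image, the others to fresh points that
  the retraction \<open>r\<close> maps back to the image.\<close>
lemma exists_injective_lift:
  assumes "finite V" "g ` V \<subseteq> W" "infinite (- W)"
  shows "\<exists>X f r. finite X \<and> X \<inter> W = {} \<and> card X = card V - card (g ` V) \<and>
    (\<forall>x\<in>W. r x = x) \<and> r ` X \<subseteq> W \<and> inj_on f V \<and> f ` V \<subseteq> W \<union> X \<and> (\<forall>v\<in>V. r (f v) = g v)"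
proof -
  obtain R where R: "R \<subseteq> V" "inj_on g R" "g ` R = g ` V"
    using exists_subset_inj_on_same_image[of V g] by (elim exE conjE) (rule that)
  define N where "N = V - R"
  have "finite N"
    unfolding N_def using \<open>finite V\<close> by simp
  have card_N: "card N = card V - card (g ` V)"
    using card_Diff_subset[OF finite_subset[OF R(1) \<open>finite V\<close>] R(1)] card_image[OF R(2)] R(3)
    unfolding N_def by simp
  obtain X where X: "finite X" "card X = card N" "X \<subseteq> - W"
    using infinite_arbitrarily_large[OF assms(3)] by blast
  obtain b where b: "bij_betw b N X"
    using finite_same_card_bij[OF \<open>finite N\<close> X(1) X(2)[symmetric]] by blast
  define r where "r x = (if x \<in> X then g (inv_into N b x) else x)" for x
  define f where "f v = (if v \<in> R then g v else b v)" for v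
  have r_W: "\<forall>x\<in>W. r x = x"
    using X(3) unfolding r_def by auto
  have r_X: "r ` X \<subseteq> W"
    using bij_betw_apply[OF bij_betw_inv_into[OF b]] assms(2) unfolding r_def N_def by auto
  have f_R: "f ` R \<subseteq> W" and f_N: "f ` N \<subseteq> X"
    using R(1) assms(2) bij_betw_apply[OF b] unfolding f_def N_def by auto
  have lift: "\<forall>v\<in>V. r (f v) = g v"
  proof
    fix v
    assume "v \<in> V"
    show "r (f v) = g v"
    proof (cases "v \<in> R")
      case True
      then have "g v \<notin> X"
        using assms(2) X(3) \<open>v \<in> V\<close> by auto
      then show ?thesis
        using True unfolding f_def r_def by simp
    next
      case False
      then have "v \<in> N"
        using \<open>v \<in> V\<close> unfolding N_def by simp
      then show ?thesis
        using False bij_betw_apply[OF b] bij_betw_inv_into_left[OF b] unfolding f_def r_def by simp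
    qed
  qed
  have inj: "inj_on f V"
  proof -
    have "inj_on f R"
      using R(2) inj_on_cong[of R f g] unfolding f_def by simp
    moreover have "inj_on f N"
      using bij_betw_imp_inj_on[OF b] inj_on_cong[of N f b] unfolding f_def N_def by simp
    moreover have "f ` (R - N) \<inter> f ` (N - R) = {}"
      using f_R f_N X(3) by blast
    moreover have "R \<union> N = V"
      using R(1) unfolding N_def by blast
    ultimately show ?thesis
      using inj_on_Un[of f R N] by simp
  qed
  have f_V: "f ` V \<subseteq> W \<union> X"
    using f_R f_N R(1) unfolding N_def by blast
  have "X \<inter> W = {}" "card X = card V - card (g ` V)"
    using X(2,3) card_N by auto
  then show ?thesis
    by (intro exI[of _ X] exI[of _ f] exI[of _ r] conjI X(1) r_W r_X inj f_V lift)
qed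

lemma homomorphism_imp_subgraph_iso_add_twins:
  assumes "finite V" "\<forall>v\<in>V. g v \<in> W" "\<forall>u v. E u v \<longrightarrow> F (g u) (g v)" "infinite (- W)"
  shows "\<exists>W' F'. add_twins W F (card V - card (g ` V)) W' F' \<and> subgraph_iso V E W' F'"
proof -
  have "g ` V \<subseteq> W"
    using assms(2) by blast
  obtain X f r where X: "finite X" "X \<inter> W = {}" "card X = card V - card (g ` V)"
    and r: "\<forall>x\<in>W. r x = x" "r ` X \<subseteq> W"
    and f: "inj_on f V" "f ` V \<subseteq> W \<union> X" "\<forall>v\<in>V. r (f v) = g v"
    using exists_injective_lift[OF assms(1) \<open>g ` V \<subseteq> W\<close> assms(4)]
    by (elim exE conjE) (rule that)
  have "\<exists>F'. add_twins W F (card X) (W \<union> X) F' \<and>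
      (\<forall>x\<in>W \<union> X. \<forall>y\<in>W \<union> X. F' x y = F (r x) (r y))"
    by (rule add_twins_retraction[OF X(1,2) r])
  then obtain F' where twins: "add_twins W F (card X) (W \<union> X) F'"
    and F'_eq: "\<forall>x\<in>W \<union> X. \<forall>y\<in>W \<union> X. F' x y = F (r x) (r y)"
    by (elim exE conjE) (rule that)
  have "F' (f u) (f v)" if "u \<in> V" "v \<in> V" "E u v" for u v
  proof -
    have "f u \<in> W \<union> X" "f v \<in> W \<union> X"
      using f(2) that(1,2) by auto
    then have "F' (f u) (f v) = F (g u) (g v)"
      using F'_eq f(3) that(1,2) by simp
    then show ?thesis
      using assms(3) that(3) by simp
  qed
  then have "subgraph_iso V E (W \<union> X) F'"
    unfolding subgraph_iso_def using f(1,2) by blast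
  then show ?thesis
    using twins X(3) by auto
qed

definition rank :: "'a::linorder set \<Rightarrow> 'a \<Rightarrow> nat" where
  "rank A x = card {y \<in> A. y \<le> x}"

lemma rank_le_card: "finite A \<Longrightarrow> rank A x \<le> card A"
  unfolding rank_def by (rule card_mono) auto

lemma rank_pos: "finite A \<Longrightarrow> x \<in> A \<Longrightarrow> 0 < rank A x"
  unfolding rank_def by (subst card_gt_0_iff) auto

lemma rank_strict_mono:
  assumes "finite A" "y \<in> A" "x < y"
  shows "rank A x < rank A y"
  unfolding rank_def
proof (rule psubset_card_mono)
  show "finite {z \<in> A. z \<le> y}"
    using assms(1) by simp
  have "y \<in> {z \<in> A. z \<le> y} - {z \<in> A. z \<le> x}"
    using assms(2,3) by auto
  moreover have "{z \<in> A. z \<le> x} \<subseteq> {z \<in> A. z \<le> y}"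
    using assms(3) by auto
  ultimately show "{z \<in> A. z \<le> x} \<subset> {z \<in> A. z \<le> y}"
    by blast
qed

lemma inj_on_rank: "finite A \<Longrightarrow> inj_on (rank A) A"
  by (rule strict_mono_on_imp_inj_on) (auto intro: strict_mono_onI rank_strict_mono)

text \<open>Right endpoints are ranked; left endpoints that are no right endpoints take part in no
  contact and are all moved to position 1, below every ranked right endpoint.\<close>
lemma abutting_intervals_imp_shift_homomorphism:
  assumes g: "graph V E" and ai: "abutting_intervals V E lo hi"
  shows "\<exists>m \<phi>. (\<forall>v\<in>V. \<phi> v \<in> shift_V m) \<and> (\<forall>u v. E u v \<longrightarrow> shift_E m (\<phi> u) (\<phi> v)) \<and>
    m \<le> card (\<phi> ` V) + 1"
proof -
  define H where "H = hi ` V"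
  have "finite H"
    unfolding H_def using graph_finite[OF g] by simp
  define \<phi> where "\<phi> v = (if lo v \<in> H then Suc (rank H (lo v)) else 1, Suc (rank H (hi v)))" for v
  define m where "m = Suc (card H)"
  have \<phi>_V: "\<phi> v \<in> shift_V m" if "v \<in> V" for v
  proof -
    have "hi v \<in> H" "lo v < hi v"
      using that ai unfolding H_def abutting_intervals_def by auto
    then have "fst (\<phi> v) < snd (\<phi> v)"
      using rank_strict_mono[OF \<open>finite H\<close>] rank_pos[OF \<open>finite H\<close>] unfolding \<phi>_def by auto
    moreover have "snd (\<phi> v) \<le> m"
      using rank_le_card[OF \<open>finite H\<close>] unfolding \<phi>_def m_def by simp
    ultimately show ?thesis
      unfolding shift_V_def \<phi>_def by auto
  qed
  have \<phi>_E: "shift_E m (\<phi> u) (\<phi> v)" if e: "E u v" for u v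
  proof -
    have uv: "u \<in> V" "v \<in> V"
      using graph_edgeD[OF g e] by auto
    have meet: "snd (\<phi> x) = fst (\<phi> y)" if "x \<in> V" "hi x = lo y" for x y
    proof -
      have "lo y \<in> H"
        using that unfolding H_def by force
      then show ?thesis
        using that(2) unfolding \<phi>_def by simp
    qed
    have "hi u = lo v \<or> hi v = lo u"
      using ai e unfolding abutting_intervals_def by blast
    then have "snd (\<phi> u) = fst (\<phi> v) \<or> snd (\<phi> v) = fst (\<phi> u)"
      using meet uv by blast
    then show ?thesis
      using \<phi>_V uv unfolding shift_E_def by blast
  qed
  have "card H = card (snd ` \<phi> ` V)"
  proof -
    have "snd ` \<phi> ` V = (\<lambda>x. Suc (rank H x)) ` H"
      unfolding \<phi>_def H_def by force
    moreover have "inj_on (\<lambda>x. Suc (rank H x)) H"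
      using inj_on_rank[OF \<open>finite H\<close>] by (simp add: inj_on_def)
    ultimately show ?thesis
      by (simp add: card_image)
  qed
  also have "\<dots> \<le> card (\<phi> ` V)"
    using graph_finite[OF g] by (intro card_image_le) simp
  finally have "m \<le> card (\<phi> ` V) + 1"
    unfolding m_def by simp
  then show ?thesis
    using \<phi>_V \<phi>_E by blast
qed

lemma finite_shift_V: "finite (shift_V m)"
  by (rule finite_subset[of _ "{..m} \<times> {..m}"]) (auto simp: shift_V_def)

lemma abutting_intervals_imp_twin_shift_sub:
  assumes g: "graph V E" and "card V = n" and ai: "abutting_intervals V E lo hi"
  shows "twin_shift_sub n V E"
proof -
  obtain m \<phi> where \<phi>_V: "\<forall>v\<in>V. \<phi> v \<in> shift_V m"
    and \<phi>_E: "\<forall>u v. E u v \<longrightarrow> shift_E m (\<phi> u) (\<phi> v)" and m: "m \<le> card (\<phi> ` V) + 1"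
    using abutting_intervals_imp_shift_homomorphism[OF g ai] by blast
  have "infinite (- shift_V m)"
    by (simp add: finite_shift_V finite_prod)
  then obtain W F where "add_twins (shift_V m) (shift_E m) (n - card (\<phi> ` V)) W F"
    and "subgraph_iso V E W F"
    using homomorphism_imp_subgraph_iso_add_twins[OF graph_finite[OF g] \<phi>_V \<phi>_E]
    unfolding \<open>card V = n\<close> by blast
  moreover have "m + (n - card (\<phi> ` V)) \<le> n + 1"
    using m card_image_le[OF graph_finite[OF g], of \<phi>] \<open>card V = n\<close> by linarith
  ultimately show ?thesis
    unfolding twin_shift_sub_def by blast
qed

theorem mainTheorem12:
  fixes V :: "'a set" and E :: "'a \<Rightarrow> 'a \<Rightarrow> bool" and n :: nat
  assumes "graph V E" and "card V = n" and "n \<ge> 1"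
  shows "(CBU V E \<longleftrightarrow> has_HAL V E) \<and> (has_HAL V E \<longleftrightarrow> twin_shift_sub n V E)
         \<and> (twin_shift_sub n V E \<longleftrightarrow> d_CBU (2 * n - 1) V E)"
proof -
  note g = assms(1)
  let ?intervals = "\<exists>lo hi. abutting_intervals V E lo hi"
  have dims: "card V \<le> 2 * n - 1" "1 \<le> 2 * n - 1"
    using assms(2,3) by simp_all
  have "CBU V E \<Longrightarrow> ?intervals"
    using d_CBU_imp_abutting_intervals[OF g] unfolding CBU_def by blast
  moreover have "?intervals \<Longrightarrow> d_CBU (2 * n - 1) V E"
    using abutting_intervals_imp_d_CBU[OF g _ dims] by blast
  moreover have "d_CBU (2 * n - 1) V E \<Longrightarrow> CBU V E"
    using dims(2) unfolding CBU_def by blast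
  moreover have "has_HAL V E \<longleftrightarrow> ?intervals"
    using has_HAL_imp_abutting_intervals[OF g] abutting_intervals_imp_has_HAL[OF g] by blast
  moreover have "twin_shift_sub n V E \<longleftrightarrow> ?intervals"
    using twin_shift_sub_imp_abutting_intervals[OF g]
      abutting_intervals_imp_twin_shift_sub[OF g assms(2)] by blast
  ultimately show ?thesis
    by blast
qed

end
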